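(* Let $n\ge 2$ and let $g=(g_1,\dots,g_{n-1},0)$ be a smooth compactly supported vector field on $\mathbb{R}^{n-1}$. Then there exists a smooth divergence-free vector field $\phi=(\phi_1,\dots,\phi_n)$ on $\overline{\mathbb{R}^n_+}$, with compact support in $\overline{\mathbb{R}^n_+}$, such that $\phi|_{x_n=0}=0$ and $\frac{\partial\phi}{\partial x_n}\big|_{x_n=0}=g$.
   Context: $\mathbb{R}^n_+=\{x=(x',x_n)\in\mathbb{R}^n: x_n>0\}$, and $\mathbb{R}^{n-1}$ is identified with the boundary $\{x_n=0\}$. *)

theory Defs
  imports "HOL-Analysis.Analysis"
begin

definition pderiv_dir :: "('a::euclidean_space \<Rightarrow> 'b::euclidean_space) \<Rightarrow> 'a \<Rightarrow> 'a \<Rightarrow> 'b" where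
  "pderiv_dir f x v = frechet_derivative f (at x) v"

fun Ck :: "nat \<Rightarrow> ('a::euclidean_space \<Rightarrow> 'b::euclidean_space) \<Rightarrow> bool" where
  "Ck 0 f = continuous_on UNIV f"
| "Ck (Suc k) f = ((\<forall>x. f differentiable (at x)) \<and> continuous_on UNIV f \<and>
      (\<forall>i\<in>Basis. Ck k (\<lambda>x. pderiv_dir f x i)))"

definition smooth :: "('a::euclidean_space \<Rightarrow> 'b::euclidean_space) \<Rightarrow> bool" where
  "smooth f = (\<forall>k. Ck k f)"

definition divergence :: "('a::euclidean_space \<Rightarrow> 'a) \<Rightarrow> 'a \<Rightarrow> real" where
  "divergence f x = (\<Sum>b\<in>Basis. pderiv_dir f x b \<bullet> b)"

end

theory Submission imports Defs "HOL-Computational_Algebra.Polynomial" begin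

text \<open>Choose a smooth profile \<open>\<psi>\<close> on the line with \<open>\<psi>(0) = \<psi>'(0) = 0\<close>, \<open>\<psi>''(0) = 1\<close> and
  \<open>\<psi> = 0\<close> on \<open>(1, \<infinity>)\<close>, e.g. \<open>\<psi>(t) = t\<^sup>2 exp (1 - 1/(1 - t)) / 2\<close> for \<open>t < 1\<close>, and put
  \<open>\<phi>(x', t) = (\<psi>'(t) g(x'), -\<psi>(t) div g(x'))\<close>. Its divergence is
  \<open>\<psi>'(t) div g(x') - \<psi>'(t) div g(x') = 0\<close>; at \<open>t = 0\<close> it vanishes and its normal derivative is
  \<open>(\<psi>''(0) g(x'), -\<psi>'(0) div g(x')) = (g(x'), 0)\<close>; and it is supported in \<open>supp g \<times> (-\<infinity>, 1]\<close>.\<close>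

declare Ck.simps(2)[simp del]

lemma pderiv_dir_eq: "(f has_derivative f') (at x) \<Longrightarrow> pderiv_dir f x v = f' v"
  unfolding pderiv_dir_def using frechet_derivative_at by metis

lemma has_derivative_pderiv_dir:
  "f differentiable (at x) \<Longrightarrow> (f has_derivative pderiv_dir f x) (at x)"
  unfolding pderiv_dir_def using frechet_derivative_works by blast

lemma linear_pderiv_dir: "f differentiable (at x) \<Longrightarrow> linear (pderiv_dir f x)"
  using has_derivative_pderiv_dir has_derivative_linear by blast

lemma pderiv_dir_scaleR:
  "a differentiable (at x) \<Longrightarrow> f differentiable (at x) \<Longrightarrow>
    pderiv_dir (\<lambda>x. a x *\<^sub>R f x) x v = a x *\<^sub>R pderiv_dir f x v + pderiv_dir a x v *\<^sub>R f x"
  by (rule pderiv_dir_eq[OF has_derivative_scaleR[OF has_derivative_pderiv_dir has_derivative_pderiv_dir]])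

lemma pderiv_dir_mult:
  fixes a f :: "'a::euclidean_space \<Rightarrow> real"
  shows "a differentiable (at x) \<Longrightarrow> f differentiable (at x) \<Longrightarrow>
    pderiv_dir (\<lambda>x. a x * f x) x v = a x * pderiv_dir f x v + pderiv_dir a x v * f x"
  using pderiv_dir_scaleR[of a x f v] by simp

lemma pderiv_dir_bounded_linear:
  "bounded_linear L \<Longrightarrow> f differentiable (at x) \<Longrightarrow>
    pderiv_dir (\<lambda>x. L (f x)) x v = L (pderiv_dir f x v)"
  by (rule pderiv_dir_eq[OF bounded_linear.has_derivative[OF _ has_derivative_pderiv_dir]])

lemma pderiv_dir_compose_linear:
  assumes "bounded_linear L" "f differentiable (at (L x))"
  shows "pderiv_dir (\<lambda>x. f (L x)) x v = pderiv_dir f (L x) (L v)"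
proof -
  have "((\<lambda>x. f (L x)) has_derivative (\<lambda>v. pderiv_dir f (L x) (L v))) (at x)"
    using has_derivative_compose[OF bounded_linear.has_derivative[OF assms(1) has_derivative_ident]
        has_derivative_pderiv_dir[OF assms(2)]]
    by (simp add: o_def)
  then show ?thesis by (rule pderiv_dir_eq)
qed

lemma pderiv_dir_Pair:
  "f differentiable (at x) \<Longrightarrow> g differentiable (at x) \<Longrightarrow>
    pderiv_dir (\<lambda>x. (f x, g x)) x v = (pderiv_dir f x v, pderiv_dir g x v)"
  by (rule pderiv_dir_eq[OF has_derivative_Pair[OF has_derivative_pderiv_dir has_derivative_pderiv_dir]])

lemma pderiv_dir_real:
  fixes f :: "real \<Rightarrow> real"
  shows "f differentiable (at x) \<Longrightarrow> pderiv_dir f x v = v * deriv f x"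
  by (metis DERIV_deriv_iff_real_differentiable has_field_derivative_def mult.commute pderiv_dir_eq)

lemma pderiv_dir_eq_0_open:
  assumes "f differentiable (at x)" "open X" "x \<in> X" "\<And>y. y \<in> X \<Longrightarrow> f y = 0"
  shows "pderiv_dir f x v = 0"
  unfolding pderiv_dir_def
  using assms frechet_derivative_transform_within_open[of f x X "\<lambda>_. 0"] by simp

lemma divergence_eq_0_outside_support:
  assumes "g differentiable (at y)" "y \<notin> closure {x. g x \<noteq> 0}"
  shows "divergence g y = 0"
proof -
  have "pderiv_dir g y b = 0" for b
    by (rule pderiv_dir_eq_0_open[OF assms(1), of "- closure {x. g x \<noteq> 0}"])
      (use assms(2) closure_subset[of "{x. g x \<noteq> 0}"] in auto)
  then show ?thesis by (simp add: divergence_def)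
qed

lemma divergence_prod_real:
  fixes \<phi> :: "'a::euclidean_space \<times> real \<Rightarrow> 'a \<times> real"
  shows "divergence \<phi> x =
    (\<Sum>i\<in>Basis. fst (pderiv_dir \<phi> x (i, 0)) \<bullet> i) + snd (pderiv_dir \<phi> x (0, 1))"
proof -
  have inj: "inj_on (\<lambda>u. (u, 0::real)) Basis" by (auto intro: inj_onI)
  show ?thesis
    unfolding divergence_def Basis_prod_def
    by (subst sum.union_disjoint) (auto simp: sum.reindex[OF inj] inner_prod_def)
qed

lemma Ck_differentiable: "Ck (Suc k) f \<Longrightarrow> f differentiable (at x)"
  by (simp add: Ck.simps(2))

lemma Ck_pderiv_dir: "Ck (Suc k) f \<Longrightarrow> i \<in> Basis \<Longrightarrow> Ck k (\<lambda>x. pderiv_dir f x i)"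
  by (simp add: Ck.simps(2))

lemma has_derivative_Ck: "Ck (Suc k) f \<Longrightarrow> (f has_derivative pderiv_dir f x) (at x)"
  using has_derivative_pderiv_dir Ck_differentiable by blast

lemma smooth_differentiable: "smooth f \<Longrightarrow> f differentiable (at x)"
  unfolding smooth_def using Ck_differentiable by blast

lemma Ck_Suc_imp_Ck: "Ck (Suc k) f \<Longrightarrow> Ck k f"
proof (induction k arbitrary: f)
  case 0 then show ?case by (simp add: Ck.simps(2))
next
  case (Suc k)
  then show ?case by (subst Ck.simps(2)) (auto simp: Ck.simps(2))
qed

lemma Ck_SucI:
  assumes "\<And>x. (f has_derivative D x) (at x)" and "\<And>i. i \<in> Basis \<Longrightarrow> Ck k (\<lambda>x. D x i)"
  shows "Ck (Suc k) f"
proof -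
  have diff: "\<And>x. f differentiable (at x)" using assms(1) by (auto simp: differentiable_def)
  then have "continuous_on UNIV f"
    by (simp add: differentiable_imp_continuous_within continuous_at_imp_continuous_on)
  moreover have "(\<lambda>x. pderiv_dir f x i) = (\<lambda>x. D x i)" for i
    using pderiv_dir_eq assms(1) by blast
  ultimately show ?thesis using diff assms(2) by (simp add: Ck.simps(2))
qed

lemma Ck_real_SucI:
  fixes f :: "real \<Rightarrow> real"
  assumes "\<And>x. (f has_real_derivative f' x) (at x)" "Ck k f'"
  shows "Ck (Suc k) f"
proof (rule Ck_SucI[where D="\<lambda>x v. f' x * v"])
  show "(f has_derivative (\<lambda>v. f' x * v)) (at x)" for x
    using assms(1)[of x] by (simp add: has_field_derivative_def)
  show "Ck k (\<lambda>x. f' x * i)" if "i \<in> Basis" for i :: real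
    using that assms(2) by simp
qed

lemma Ck_const: "Ck k (\<lambda>x. c)"
proof (induction k arbitrary: c)
  case (Suc k)
  show ?case by (rule Ck_SucI[where D="\<lambda>x v. 0"]) (auto intro: Suc)
qed simp

lemma Ck_bounded_linear: "bounded_linear L \<Longrightarrow> Ck k L"
proof (induction k)
  case 0 then show ?case by (simp add: linear_continuous_on)
next
  case (Suc k)
  show ?case
    by (rule Ck_SucI[where D="\<lambda>x v. L v"])
      (auto intro: Ck_const bounded_linear.has_derivative[OF Suc.prems])
qed

lemma Ck_add: "Ck k f \<Longrightarrow> Ck k g \<Longrightarrow> Ck k (\<lambda>x. f x + g x)"
proof (induction k arbitrary: f g)
  case 0 then show ?case by (simp add: continuous_on_add)
next
  case (Suc k)
  show ?case
    by (rule Ck_SucI[where D="\<lambda>x v. pderiv_dir f x v + pderiv_dir g x v"])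
      (use Suc in \<open>auto intro!: has_derivative_add has_derivative_Ck Ck_pderiv_dir\<close>)
qed

lemma Ck_sum: "finite A \<Longrightarrow> (\<And>a. a \<in> A \<Longrightarrow> Ck k (f a)) \<Longrightarrow> Ck k (\<lambda>x. \<Sum>a\<in>A. f a x)"
  by (induction A rule: finite_induct) (auto intro: Ck_add Ck_const)

lemma Ck_Pair: "Ck k f \<Longrightarrow> Ck k g \<Longrightarrow> Ck k (\<lambda>x. (f x, g x))"
proof (induction k arbitrary: f g)
  case 0 then show ?case by (simp add: continuous_on_Pair)
next
  case (Suc k)
  show ?case
    by (rule Ck_SucI[where D="\<lambda>x v. (pderiv_dir f x v, pderiv_dir g x v)"])
      (use Suc in \<open>auto intro!: has_derivative_Pair has_derivative_Ck Ck_pderiv_dir\<close>)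
qed

lemma Ck_compose_bounded_linear:
  "bounded_linear L \<Longrightarrow> Ck k f \<Longrightarrow> Ck k (\<lambda>x. L (f x))"
proof (induction k arbitrary: f)
  case 0 then show ?case
    using continuous_on_compose[OF _ linear_continuous_on] by (auto simp: o_def)
next
  case (Suc k)
  show ?case
    by (rule Ck_SucI[where D="\<lambda>x v. L (pderiv_dir f x v)"])
      (use Suc in \<open>auto intro: bounded_linear.has_derivative has_derivative_Ck Ck_pderiv_dir\<close>)
qed

lemma Ck_minus: "Ck k f \<Longrightarrow> Ck k (\<lambda>x. - f x)"
  by (rule Ck_compose_bounded_linear[OF bounded_linear_minus[OF bounded_linear_ident]])

lemma Ck_scaleR: "Ck k a \<Longrightarrow> Ck k f \<Longrightarrow> Ck k (\<lambda>x. a x *\<^sub>R f x)"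
proof (induction k arbitrary: a f)
  case 0 then show ?case by (simp add: continuous_on_scaleR)
next
  case (Suc k)
  show ?case
  proof (rule Ck_SucI[where D="\<lambda>x v. a x *\<^sub>R pderiv_dir f x v + pderiv_dir a x v *\<^sub>R f x"])
    show "((\<lambda>x. a x *\<^sub>R f x) has_derivative
        (\<lambda>v. a x *\<^sub>R pderiv_dir f x v + pderiv_dir a x v *\<^sub>R f x)) (at x)" for x
      using has_derivative_scaleR[OF has_derivative_Ck[OF Suc.prems(1)] has_derivative_Ck[OF Suc.prems(2)]]
      by simp
    show "Ck k (\<lambda>x. a x *\<^sub>R pderiv_dir f x i + pderiv_dir a x i *\<^sub>R f x)" if "i \<in> Basis" for i
      using Suc.prems that
      by (intro Ck_add Suc.IH[OF Ck_Suc_imp_Ck] Suc.IH[OF _ Ck_Suc_imp_Ck] Ck_pderiv_dir) auto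
  qed
qed

lemma Ck_mult:
  fixes a f :: "'a::euclidean_space \<Rightarrow> real"
  shows "Ck k a \<Longrightarrow> Ck k f \<Longrightarrow> Ck k (\<lambda>x. a x * f x)"
  using Ck_scaleR[of k a f] by simp

lemma Ck_compose_affine:
  "bounded_linear L \<Longrightarrow> Ck k f \<Longrightarrow> Ck k (\<lambda>x. f (c + L x))"
proof (induction k arbitrary: f)
  case 0
  have "continuous_on UNIV (\<lambda>x. c + L x)"
    by (intro continuous_intros linear_continuous_on 0(1))
  with 0 show ?case
    using continuous_on_compose[of UNIV "\<lambda>x. c + L x" f] continuous_on_subset by (auto simp: o_def)
next
  case (Suc k)
  have lin: "linear (pderiv_dir f y)" for y
    using Suc.prems(2) Ck_differentiable linear_pderiv_dir by blast
  have chain: "pderiv_dir f (c + L x) (L v) = (\<Sum>b\<in>Basis. (L v \<bullet> b) *\<^sub>R pderiv_dir f (c + L x) b)"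
    for x v
    by (subst euclidean_representation[symmetric, of "L v"])
      (simp add: linear_sum[OF lin] linear_scale[OF lin])
  show ?case
  proof (rule Ck_SucI[where D="\<lambda>x v. pderiv_dir f (c + L x) (L v)"])
    show "((\<lambda>x. f (c + L x)) has_derivative (\<lambda>v. pderiv_dir f (c + L x) (L v))) (at x)" for x
      using has_derivative_compose[OF has_derivative_add[OF has_derivative_const
            bounded_linear.has_derivative[OF Suc.prems(1) has_derivative_ident]]
          has_derivative_Ck[OF Suc.prems(2)]]
      by (simp add: o_def)
    show "Ck k (\<lambda>x. pderiv_dir f (c + L x) (L i))" if "i \<in> Basis" for i
      unfolding chain
      using Suc by (intro Ck_sum Ck_scaleR Ck_const Suc.IH Ck_pderiv_dir) auto
  qed
qed

lemma Ck_compose_linear: "bounded_linear L \<Longrightarrow> Ck k f \<Longrightarrow> Ck k (\<lambda>x. f (L x))"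
  using Ck_compose_affine[of L k f 0] by simp

lemma Ck_deriv:
  fixes f :: "real \<Rightarrow> real"
  assumes "Ck (Suc k) f"
  shows "Ck k (deriv f)"
proof -
  have "deriv f = (\<lambda>t. pderiv_dir f t 1)"
    using pderiv_dir_real[OF Ck_differentiable[OF assms]] by simp
  then show ?thesis using Ck_pderiv_dir[OF assms] by simp
qed

lemma Ck_divergence: "Ck (Suc k) g \<Longrightarrow> Ck k (divergence g)"
  unfolding divergence_def[abs_def]
  by (intro Ck_sum Ck_compose_bounded_linear[OF bounded_linear_inner_left] Ck_pderiv_dir) auto

lemma smooth_compose_linear: "bounded_linear L \<Longrightarrow> smooth f \<Longrightarrow> smooth (\<lambda>x. f (L x))"
  unfolding smooth_def using Ck_compose_linear by blast

lemma smooth_compose_fst: "smooth f \<Longrightarrow> smooth (\<lambda>x. f (fst x))"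
  by (rule smooth_compose_linear[OF bounded_linear_fst])

lemma smooth_compose_snd: "smooth f \<Longrightarrow> smooth (\<lambda>x. f (snd x))"
  by (rule smooth_compose_linear[OF bounded_linear_snd])

lemma smooth_Pair: "smooth f \<Longrightarrow> smooth g \<Longrightarrow> smooth (\<lambda>x. (f x, g x))"
  unfolding smooth_def using Ck_Pair by blast

lemma smooth_scaleR: "smooth a \<Longrightarrow> smooth f \<Longrightarrow> smooth (\<lambda>x. a x *\<^sub>R f x)"
  unfolding smooth_def using Ck_scaleR by blast

lemma smooth_mult:
  fixes a f :: "'a::euclidean_space \<Rightarrow> real"
  shows "smooth a \<Longrightarrow> smooth f \<Longrightarrow> smooth (\<lambda>x. a x * f x)"
  unfolding smooth_def using Ck_mult by blast

lemma smooth_minus: "smooth f \<Longrightarrow> smooth (\<lambda>x. - f x)"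
  unfolding smooth_def using Ck_minus by blast

lemma smooth_deriv:
  fixes f :: "real \<Rightarrow> real"
  shows "smooth f \<Longrightarrow> smooth (deriv f)"
  unfolding smooth_def using Ck_deriv by blast

lemma smooth_divergence: "smooth g \<Longrightarrow> smooth (divergence g)"
  unfolding smooth_def using Ck_divergence by blast

section \<open>A smooth profile function\<close>

definition exp_flat :: "real poly \<Rightarrow> real \<Rightarrow> real" where
  "exp_flat p t = (if t > 0 then poly p (inverse t) * exp (- inverse t) else 0)"

text \<open>Differentiating \<open>p(1/t) e\<^sup>-\<^sup>1\<^sup>/\<^sup>t\<close> gives \<open>q(1/t) e\<^sup>-\<^sup>1\<^sup>/\<^sup>t\<close> with \<open>q(u) = u\<^sup>2 (p(u) - p'(u))\<close>,
  so the class of such functions is closed under differentiation.\<close>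
definition exp_flat_deriv_poly :: "real poly \<Rightarrow> real poly" where
  "exp_flat_deriv_poly p = [:0, 0, 1:] * (p - pderiv p)"

lemma tendsto_poly_times_exp_neg:
  fixes p :: "real poly"
  shows "((\<lambda>u. poly p u * exp (- u)) \<longlongrightarrow> 0) at_top"
proof -
  have "((\<lambda>u. \<Sum>i\<le>degree p. coeff p i * (u ^ i / exp u)) \<longlongrightarrow> (\<Sum>i\<le>degree p. coeff p i * 0)) at_top"
    by (intro tendsto_sum tendsto_mult tendsto_const tendsto_power_div_exp_0)
  then show ?thesis
    by (simp add: poly_altdef sum_divide_distrib exp_minus field_simps)
qed

lemma exp_flat_has_real_derivative_0: "(exp_flat p has_real_derivative 0) (at 0)"
  unfolding has_field_derivative_iff
proof (rule filterlim_split_at)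
  show "((\<lambda>y. (exp_flat p y - exp_flat p 0) / (y - 0)) \<longlongrightarrow> 0) (at_left 0)"
    by (rule tendsto_eventually, rule eventually_mono[OF eventually_at_left_real[of "-1" 0]])
      (auto simp: exp_flat_def)
  have "((\<lambda>t. poly (pCons 0 p) (inverse t) * exp (- inverse t)) \<longlongrightarrow> 0) (at_right 0)"
    using filterlim_compose[OF tendsto_poly_times_exp_neg[of "pCons 0 p"] filterlim_inverse_at_top_right]
    by (simp add: o_def)
  moreover have "\<forall>\<^sub>F y in at_right 0. poly (pCons 0 p) (inverse y) * exp (- inverse y) =
      (exp_flat p y - exp_flat p 0) / (y - 0)"
    by (rule eventually_mono[OF eventually_at_right_real[of 0 1]]) (auto simp: exp_flat_def field_simps)
  ultimately show "((\<lambda>y. (exp_flat p y - exp_flat p 0) / (y - 0)) \<longlongrightarrow> 0) (at_right 0)"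
    by (rule Lim_transform_eventually)
qed

lemma has_real_derivative_exp_flat:
  "(exp_flat p has_real_derivative exp_flat (exp_flat_deriv_poly p) t) (at t)"
proof (cases t "0::real" rule: linorder_cases)
  case less
  have "((\<lambda>_. 0) has_real_derivative 0) (at t)" by simp
  then have "(exp_flat p has_real_derivative 0) (at t)"
    by (rule has_field_derivative_transform_within_open[of _ _ _ "{..<0}"])
      (use less in \<open>auto simp: exp_flat_def\<close>)
  then show ?thesis using less by (simp add: exp_flat_def)
next
  case equal
  then show ?thesis using exp_flat_has_real_derivative_0[of p] by (simp add: exp_flat_def)
next
  case greater
  have "((\<lambda>t. poly p (inverse t) * exp (- inverse t)) has_real_derivative
      poly (pderiv p) (inverse t) * (- inverse (t\<^sup>2)) * exp (- inverse t) +
      poly p (inverse t) * (exp (- inverse t) * inverse (t\<^sup>2))) (at t)"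
    using greater
    by (auto intro!: derivative_eq_intros DERIV_chain2[OF poly_DERIV]
        simp: power2_eq_square field_simps)
  then have "(exp_flat p has_real_derivative
      poly (pderiv p) (inverse t) * (- inverse (t\<^sup>2)) * exp (- inverse t) +
      poly p (inverse t) * (exp (- inverse t) * inverse (t\<^sup>2))) (at t)"
    by (rule has_field_derivative_transform_within_open[of _ _ _ "{0<..}"])
      (use greater in \<open>auto simp: exp_flat_def\<close>)
  then show ?thesis
    using greater by (simp add: exp_flat_def exp_flat_deriv_poly_def algebra_simps power2_eq_square)
qed

lemma Ck_exp_flat: "Ck k (exp_flat p)"
proof (induction k arbitrary: p)
  case 0
  have "continuous_on UNIV (exp_flat p)"
    by (meson has_real_derivative_exp_flat DERIV_isCont continuous_at_imp_continuous_on)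
  then show ?case by simp
next
  case (Suc k)
  then show ?case by (intro Ck_real_SucI[OF has_real_derivative_exp_flat])
qed

lemma smooth_profile_exists:
  "\<exists>\<psi>::real \<Rightarrow> real. smooth \<psi> \<and> \<psi> 0 = 0 \<and> deriv \<psi> 0 = 0 \<and> deriv (deriv \<psi>) 0 = 1 \<and>
    (\<forall>t>1. \<psi> t = 0)"
proof -
  define G where "G t = exp 1 / 2 * exp_flat 1 (1 + - t)" for t
  define \<psi> where "\<psi> t = t * t * G t" for t
  have CG: "Ck k G" for k
    unfolding G_def[abs_def]
    by (intro Ck_compose_bounded_linear[OF bounded_linear_mult_right] Ck_exp_flat
        Ck_compose_affine[OF bounded_linear_minus[OF bounded_linear_ident]])
  have Cid: "Ck k (\<lambda>t::real. t)" for k by (rule Ck_bounded_linear[OF bounded_linear_ident])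
  have "smooth \<psi>"
    unfolding smooth_def \<psi>_def[abs_def] by (intro allI Ck_mult Cid CG)
  have G': "(G has_real_derivative deriv G t) (at t)" "(deriv G has_real_derivative deriv (deriv G) t) (at t)"
    for t
    using Ck_differentiable[OF CG] Ck_differentiable[OF Ck_deriv[OF CG]]
    by (simp_all add: DERIV_deriv_iff_real_differentiable)
  have "(\<psi> has_real_derivative 2 * t * G t + t * t * deriv G t) (at t)" for t
    unfolding \<psi>_def[abs_def] by (auto intro!: derivative_eq_intros G')
  then have d\<psi>: "deriv \<psi> = (\<lambda>t. 2 * t * G t + t * t * deriv G t)"
    by (auto intro: DERIV_imp_deriv)
  have "(deriv \<psi> has_real_derivative 2 * G 0) (at 0)"
    unfolding d\<psi> by (auto intro!: derivative_eq_intros G')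
  moreover have "G 0 = 1 / 2" by (simp add: G_def exp_flat_def exp_minus)
  ultimately have "deriv (deriv \<psi>) 0 = 1" by (simp add: DERIV_imp_deriv)
  moreover have "\<psi> t = 0" if "t > 1" for t using that by (simp add: \<psi>_def G_def exp_flat_def)
  ultimately show ?thesis
    using \<open>smooth \<psi>\<close> d\<psi> by (intro exI[of _ \<psi>]) (simp add: \<psi>_def)
qed

section \<open>The divergence-free lift\<close>

definition boundary_lift :: "(real \<Rightarrow> real) \<Rightarrow> ('a::euclidean_space \<Rightarrow> 'a) \<Rightarrow> 'a \<times> real \<Rightarrow> 'a \<times> real"
  where "boundary_lift \<psi> g x =
    (deriv \<psi> (snd x) *\<^sub>R g (fst x), - (\<psi> (snd x) * divergence g (fst x)))"

lemma smooth_boundary_lift: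
  assumes "smooth \<psi>" "smooth g"
  shows "smooth (boundary_lift \<psi> g)"
  unfolding boundary_lift_def[abs_def]
  by (intro smooth_Pair smooth_scaleR smooth_minus smooth_mult smooth_compose_fst smooth_compose_snd
      smooth_deriv smooth_divergence assms)

lemma pderiv_dir_boundary_lift:
  assumes "smooth \<psi>" "smooth g"
  shows "pderiv_dir (boundary_lift \<psi> g) x v =
    (deriv \<psi> (snd x) *\<^sub>R pderiv_dir g (fst x) (fst v) + (snd v * deriv (deriv \<psi>) (snd x)) *\<^sub>R g (fst x),
     - (\<psi> (snd x) * pderiv_dir (divergence g) (fst x) (fst v) +
        snd v * deriv \<psi> (snd x) * divergence g (fst x)))"
proof -
  have smooth: "smooth (\<lambda>x. deriv \<psi> (snd x))" "smooth (\<lambda>x. \<psi> (snd x))"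
    "smooth (\<lambda>x. g (fst x))" "smooth (\<lambda>x. divergence g (fst x))"
    "smooth (\<lambda>x. \<psi> (snd x) * divergence g (fst x))"
    by (intro smooth_mult smooth_compose_fst smooth_compose_snd smooth_deriv smooth_divergence
        assms)+
  note diff = smooth_differentiable[OF smooth(1)] smooth_differentiable[OF smooth(2)]
    smooth_differentiable[OF smooth(3)] smooth_differentiable[OF smooth(4)]
    smooth_differentiable[OF smooth(5)]
  note diff_base = smooth_differentiable[OF smooth_deriv[OF assms(1)]]
    smooth_differentiable[OF assms(1)] smooth_differentiable[OF assms(2)]
    smooth_differentiable[OF smooth_divergence[OF assms(2)]]
  show ?thesis
    unfolding boundary_lift_def[abs_def]
    by (simp add: pderiv_dir_Pair pderiv_dir_scaleR pderiv_dir_mult diff diff_base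
        pderiv_dir_bounded_linear[OF bounded_linear_minus[OF bounded_linear_ident]]
        pderiv_dir_compose_linear[OF bounded_linear_fst] pderiv_dir_compose_linear[OF bounded_linear_snd]
        pderiv_dir_real)
qed

lemma divergence_boundary_lift:
  assumes "smooth \<psi>" "smooth g"
  shows "divergence (boundary_lift \<psi> g) x = 0"
proof -
  have "pderiv_dir (divergence g) y 0 = 0" for y
    using linear_0[OF linear_pderiv_dir[OF smooth_differentiable[OF smooth_divergence[OF assms(2)]]]] .
  then show ?thesis
    by (simp add: divergence_prod_real pderiv_dir_boundary_lift[OF assms] divergence_def
        sum_distrib_left)
qed

lemma boundary_lift_boundary:
  "\<psi> 0 = 0 \<Longrightarrow> deriv \<psi> 0 = 0 \<Longrightarrow> boundary_lift \<psi> g (x', 0) = 0"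
  by (simp add: boundary_lift_def zero_prod_def)

lemma pderiv_dir_boundary_lift_normal:
  assumes "smooth \<psi>" "smooth g" "deriv \<psi> 0 = 0" "deriv (deriv \<psi>) 0 = 1"
  shows "pderiv_dir (boundary_lift \<psi> g) (x', 0) (0, 1) = (g x', 0)"
  using linear_0[OF linear_pderiv_dir[OF smooth_differentiable[OF assms(2)]]]
    linear_0[OF linear_pderiv_dir[OF smooth_differentiable[OF smooth_divergence[OF assms(2)]]]]
  by (simp add: pderiv_dir_boundary_lift assms)

lemma boundary_lift_support:
  assumes "smooth \<psi>" "smooth g" "\<And>t. t > 1 \<Longrightarrow> \<psi> t = 0"
  shows "{x. 0 \<le> snd x \<and> boundary_lift \<psi> g x \<noteq> 0} \<subseteq> closure {y. g y \<noteq> 0} \<times> {0..1}"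
proof (rule subsetI, unfold mem_Collect_eq, elim conjE)
  fix x assume t: "0 \<le> snd x" and nonzero: "boundary_lift \<psi> g x \<noteq> 0"
  have "deriv \<psi> s = 0" if "s > 1" for s
  proof -
    have "pderiv_dir \<psi> s 1 = 0"
      by (rule pderiv_dir_eq_0_open[OF smooth_differentiable[OF assms(1)] open_greaterThan[of 1]])
        (use that assms(3) in auto)
    then show ?thesis using pderiv_dir_real[OF smooth_differentiable[OF assms(1)], of s 1] by simp
  qed
  then have "snd x \<le> 1"
    using nonzero assms(3) by (cases "snd x \<le> 1") (auto simp: boundary_lift_def zero_prod_def)
  moreover have "fst x \<in> closure {y. g y \<noteq> 0}"
    using nonzero closure_subset[of "{y. g y \<noteq> 0}"]
      divergence_eq_0_outside_support[OF smooth_differentiable[OF assms(2)], of "fst x"]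
    by (fastforce simp: boundary_lift_def zero_prod_def)
  ultimately show "x \<in> closure {y. g y \<noteq> 0} \<times> {0..1}"
    using t by (simp add: mem_Times_iff)
qed

theorem mainTheorem2:
  fixes g :: "real^'m \<Rightarrow> real^'m"
  assumes "smooth g"
    and "compact (closure {x. g x \<noteq> 0})"
  shows "\<exists>\<phi>::(real^'m) \<times> real \<Rightarrow> (real^'m) \<times> real.
           smooth \<phi>
         \<and> (\<forall>x. snd x \<ge> 0 \<longrightarrow> divergence \<phi> x = 0)
         \<and> compact (closure {x. snd x \<ge> 0 \<and> \<phi> x \<noteq> 0})
         \<and> (\<forall>x'. \<phi> (x', 0) = 0)
         \<and> (\<forall>x'. pderiv_dir \<phi> (x', 0) (0, 1) = (g x', 0))"
proof -
  obtain \<psi> :: "real \<Rightarrow> real" where \<psi>: "smooth \<psi>" "\<psi> 0 = 0" "deriv \<psi> 0 = 0"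
    "deriv (deriv \<psi>) 0 = 1" "\<And>t. t > 1 \<Longrightarrow> \<psi> t = 0"
    using smooth_profile_exists by blast
  have "bounded (closure {y. g y \<noteq> 0} \<times> {0..1::real})"
    using assms(2) by (simp add: bounded_Times compact_imp_bounded)
  then have "compact (closure {x. snd x \<ge> 0 \<and> boundary_lift \<psi> g x \<noteq> 0})"
    using boundary_lift_support[OF \<psi>(1) assms(1) \<psi>(5)] by (simp add: bounded_subset)
  then show ?thesis
    using smooth_boundary_lift divergence_boundary_lift boundary_lift_boundary
      pderiv_dir_boundary_lift_normal \<psi> assms(1)
    by (intro exI[of _ "boundary_lift \<psi> g"]) blast
qed

end
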